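(* Let $\mathbf d=(d_1,\dots,d_m)\in(\mathbb Z_{\ge0})^m$ and let $z=z(\mathbf s)$ be the formal power series in $\mathbf s=(s_1,\dots,s_m)$ determined by $1-z+\sum_{i=1}^m s_iz^{d_i+1}=0$, $z(0)=1$. Define the formal power series $$F(\mathbf s)=\sum_{\mathbf k\in(\mathbb Z_{\ge0})^m}\frac{\binom{2+(\mathbf d+\mathbf 1)\cdot\mathbf k}{\mathbf k}}{(1+(\mathbf d+\mathbf 1)\cdot\mathbf k)(2+(\mathbf d+\mathbf 1)\cdot\mathbf k)}\mathbf s^{\mathbf k},$$ $$G(\mathbf s)=\sum_{\mathbf k\in(\mathbb Z_{\ge0})^m}\frac{6+\sum_{i=1}^m\frac{d_i(d_i+1)}{d_i+2}k_i}{(2+(\mathbf d+\mathbf 1)\cdot\mathbf k)(3+(\mathbf d+\mathbf 1)\cdot\mathbf k)(4+(\mathbf d+\mathbf 1)\cdot\mathbf k)}\binom{4+(\mathbf d+\mathbf 1)\cdot\mathbf k}{\mathbf k}\mathbf s^{\mathbf k}.$$ Then $G=F^2$ as formal power series; more precisely $G(\mathbf s)=F(\mathbf s)^2-\frac14z^2\big(1-z+\sum_{i=1}^ms_iz^{d_i+1}\big)^2$.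
   Context: Notation: $\mathbf 1=(1,\dots,1)$, $\mathbf a\cdot\mathbf b=\sum a_ib_i$, $\mathbf s^{\mathbf k}=\prod s_i^{k_i}$, $\mathbf k!=\prod k_i!$, and the multinomial coefficient $\binom{n}{\mathbf k}=\frac{n!}{k_1!\cdots k_m!\,(n-\mathbf k\cdot\mathbf 1)!}$. *)

theory Defs
  imports Main "HOL.Real"
begin

text \<open>Formal power series in m variables s_1..s_m with real coefficients,
  represented by their coefficient function on multi-indices k, which are
  lists of naturals of length m (entry i is the exponent of s_(i+1)).
  Values on lists of other lengths are irrelevant.\<close>

type_synonym mfps = "nat list \<Rightarrow> real"

definition mfps_mult :: "nat \<Rightarrow> mfps \<Rightarrow> mfps \<Rightarrow> mfps" where
  "mfps_mult m f g k =
     (\<Sum>a\<in>{a. length a = m \<and> (\<forall>i<m. a ! i \<le> k ! i)}. f a * g (map2 (-) k a))"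

definition mone :: "nat \<Rightarrow> mfps" where
  "mone m k = (if k = replicate m 0 then 1 else 0)"

definition mvar :: "nat \<Rightarrow> nat \<Rightarrow> mfps" where
  "mvar m i k = (if k = (replicate m 0)[i := 1] then 1 else 0)"

fun mpow :: "nat \<Rightarrow> mfps \<Rightarrow> nat \<Rightarrow> mfps" where
  "mpow m f 0 = mone m"
| "mpow m f (Suc n) = mfps_mult m f (mpow m f n)"

definition dotp :: "nat list \<Rightarrow> nat list \<Rightarrow> nat" where
  "dotp d k = (\<Sum>i<length d. (d ! i + 1) * k ! i)"

definition multinom :: "nat \<Rightarrow> nat list \<Rightarrow> real" where
  "multinom n k = fact n / ((\<Prod>i<length k. fact (k ! i)) * fact (n - sum_list k))"

definition Fser :: "nat list \<Rightarrow> mfps" where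
  "Fser d k = multinom (2 + dotp d k) k
      / ((1 + real (dotp d k)) * (2 + real (dotp d k)))"

definition Gser :: "nat list \<Rightarrow> mfps" where
  "Gser d k = (6 + (\<Sum>i<length d. real (d ! i * (d ! i + 1)) / real (d ! i + 2) * real (k ! i)))
      / ((2 + real (dotp d k)) * (3 + real (dotp d k)) * (4 + real (dotp d k)))
      * multinom (4 + dotp d k) k"

definition Eser :: "nat list \<Rightarrow> mfps \<Rightarrow> mfps" where
  "Eser d z k = mone (length d) k - z k
      + (\<Sum>i<length d. mfps_mult (length d) (mvar (length d) i) (mpow (length d) z (d ! i + 1)) k)"

end

theory Submission
  imports Defs
begin

(* Write D(k) = (d+1).k and let theta be the weighted Euler operator
   multiplying the coefficient of s^k by D(k); theta is a derivation.  By Lagrange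
   inversion the coefficients of z^r are P_r(k) = r/(D+r) * multinom (D+r) k, and
   the relation z^(r+1) = z^r + sum_i s_i z^(r+1+d_i) characterises the family P_r by
   a recursion with a unique solution.  Hence P_r * P_t = P_(r+t) (both sides solve
   the recursion in r), which we prove without ever using z itself.
   Coefficientwise one checks (theta+1) F = P_2/2 and the two expansions
       F            = P_1 - P_2/2 + sum_i s_i P_(d_i+2)/(d_i+2),
       (theta+2) G  = P_3 - P_4/2 + sum_i s_i P_(d_i+4)/(d_i+2).
   Since theta is a derivation, (theta+2)(F^2) = 2 F (theta+1) F = F P_2, and expanding
   F P_2 with the first formula and P_r P_t = P_(r+t) gives the second one.  As
   theta+2 is injective, G = F^2.  Finally the correction term in the theorem vanishes
   because z satisfies its defining equation. *)

section \<open>Products of multi-index series\<close>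

definition box :: "nat \<Rightarrow> nat list \<Rightarrow> nat list set" where
  "box m k = {a. length a = m \<and> (\<forall>i<m. a ! i \<le> k ! i)}"

lemma mult_box: "mfps_mult m f g k = (\<Sum>a\<in>box m k. f a * g (map2 (-) k a))"
  by (simp add: mfps_mult_def box_def)

lemma finite_box: "finite (box m k)"
proof (rule finite_subset)
  show "box m k \<subseteq> {xs. set xs \<subseteq> {0..(\<Sum>j<m. k ! j)} \<and> length xs = m}"
  proof
    fix a assume "a \<in> box m k"
    hence a: "length a = m" "\<forall>i<m. a ! i \<le> k ! i" by (auto simp: box_def)
    have "a ! i \<le> (\<Sum>j<m. k ! j)" if "i < m" for i
      using a that member_le_sum[of i "{..<m}" "\<lambda>j. k ! j"] by force
    thus "a \<in> {xs. set xs \<subseteq> {0..(\<Sum>j<m. k ! j)} \<and> length xs = m}"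
      using a by (auto simp: in_set_conv_nth)
  qed
qed (rule finite_lists_length_eq, simp)

lemma box_complement:
  assumes "a \<in> box m k" "length k = m"
  shows "map2 (-) k (map2 (-) k a) = a" "map2 (-) k a \<in> box m k"
  using assms by (auto simp: box_def intro!: nth_equalityI)

lemma mult_comm:
  assumes "length k = m"
  shows "mfps_mult m f g k = mfps_mult m g f k"
  unfolding mult_box
  by (rule sum.reindex_bij_witness[of _ "\<lambda>a. map2 (-) k a" "\<lambda>a. map2 (-) k a"])
     (auto simp: box_complement[OF _ assms])

lemma mult_one_right:
  assumes "length k = m"
  shows "mfps_mult m f (mone m) k = f k"
proof -
  have "mone m (map2 (-) k a) = (if a = k then 1 else 0)" if "a \<in> box m k" for a
  proof -
    have "map2 (-) k a = replicate m 0 \<longleftrightarrow> a = k"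
      using that assms by (force simp: box_def list_eq_iff_nth_eq intro: antisym)
    thus ?thesis by (simp add: mone_def)
  qed
  hence "mfps_mult m f (mone m) k = (\<Sum>a\<in>box m k. if a = k then f a else 0)"
    unfolding mult_box by (intro sum.cong) auto
  also have "\<dots> = f k" using finite_box[of m k] assms by (simp add: box_def)
  finally show ?thesis .
qed

lemma mult_one_left:
  assumes "length k = m"
  shows "mfps_mult m (mone m) g k = g k"
  using mult_comm[OF assms, of "mone m" g] mult_one_right[OF assms] by simp

lemma mult_cong_left:
  assumes "\<And>a. length a = m \<Longrightarrow> f a = f' a"
  shows "mfps_mult m f g k = mfps_mult m f' g k"
  unfolding mult_box by (rule sum.cong) (auto simp: box_def assms)

lemma mult_cong_right:
  assumes "\<And>a. length a = m \<Longrightarrow> g a = g' a" "length k = m"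
  shows "mfps_mult m f g k = mfps_mult m f g' k"
  unfolding mult_box by (rule sum.cong) (auto simp: box_def assms)

lemma mpow_two:
  assumes "length k = m"
  shows "mpow m f 2 k = mfps_mult m f f k"
  by (simp add: numeral_2_eq_2 mult_cong_right[OF mult_one_right assms])

lemma mult_add_left: "mfps_mult m (\<lambda>a. f a + f' a) g k = mfps_mult m f g k + mfps_mult m f' g k"
  by (simp add: mfps_mult_def algebra_simps sum.distrib)

lemma mult_diff_left: "mfps_mult m (\<lambda>a. f a - f' a) g k = mfps_mult m f g k - mfps_mult m f' g k"
  by (simp add: mfps_mult_def algebra_simps sum_subtractf)

lemma mult_scale_left: "mfps_mult m (\<lambda>a. c * f a) g k = c * mfps_mult m f g k"
  by (simp add: mfps_mult_def algebra_simps sum_distrib_left)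

lemma mult_scale_right: "mfps_mult m f (\<lambda>a. c * g a) k = c * mfps_mult m f g k"
  by (simp add: mfps_mult_def algebra_simps sum_distrib_left)

lemma mult_divide_left: "mfps_mult m (\<lambda>a. f a / c) g k = mfps_mult m f g k / c"
  by (simp add: mfps_mult_def sum_divide_distrib)

lemma mult_sum_left: "mfps_mult m (\<lambda>a. \<Sum>j\<in>J. f j a) g k = (\<Sum>j\<in>J. mfps_mult m (f j) g k)"
  by (simp add: mfps_mult_def sum_distrib_right sum.swap[of _ J])


section \<open>Multiplication by a variable\<close>

text \<open>shift i f is the series s_i * f.\<close>

definition shift :: "nat \<Rightarrow> mfps \<Rightarrow> mfps" where
  "shift i f k = (if 0 < k ! i then f (k[i := k ! i - 1]) else 0)"

lemma shift_cong:
  assumes "\<And>a. length a = length k \<Longrightarrow> f a = f' a"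
  shows "shift i f k = shift i f' k"
  using assms by (simp add: shift_def)

text \<open>(s_i f) g = s_i (f g): reindex the box of k by lowering the i-th entry.\<close>

lemma mult_shift_left:
  assumes k: "length k = m" and i: "i < m"
  shows "mfps_mult m (shift i f) g k = shift i (mfps_mult m f g) k"
proof (cases "0 < k ! i")
  case False
  have "mfps_mult m (shift i f) g k = (\<Sum>a\<in>box m k. 0)"
    unfolding mult_box by (rule sum.cong) (use False i in \<open>auto simp: box_def shift_def\<close>)
  thus ?thesis using False by (simp add: shift_def)
next
  case True
  define k' where "k' = k[i := k ! i - 1]"
  have "mfps_mult m (shift i f) g k
      = (\<Sum>a\<in>{a\<in>box m k. 0 < a ! i}. f (a[i := a ! i - 1]) * g (map2 (-) k a))"
    unfolding mult_box shift_def by (rule sum.mono_neutral_cong_right) (auto simp: finite_box)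
  also have "\<dots> = (\<Sum>b\<in>box m k'. f b * g (map2 (-) k' b))"
  proof (rule sum.reindex_bij_witness[of _ "\<lambda>b. b[i := b ! i + 1]" "\<lambda>a. a[i := a ! i - 1]"])
    fix a assume "a \<in> {a\<in>box m k. 0 < a ! i}"
    hence a: "length a = m" "\<forall>j<m. a ! j \<le> k ! j" "0 < a ! i" by (auto simp: box_def)
    show "(a[i := a ! i - 1])[i := (a[i := a ! i - 1]) ! i + 1] = a"
      using a i by (intro nth_equalityI) (auto simp: nth_list_update)
    show "a[i := a ! i - 1] \<in> box m k'"
      using a i k by (auto simp: box_def k'_def nth_list_update)
    have "map2 (-) k' (a[i := a ! i - 1]) = map2 (-) k a"
      using a i k True by (intro nth_equalityI) (auto simp: k'_def nth_list_update)
    thus "f (a[i := a ! i - 1]) * g (map2 (-) k' (a[i := a ! i - 1])) =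
          f (a[i := a ! i - 1]) * g (map2 (-) k a)" by simp
  next
    fix b assume "b \<in> box m k'"
    hence b: "length b = m" "\<forall>j<m. b ! j \<le> k' ! j" by (auto simp: box_def)
    show "(b[i := b ! i + 1])[i := (b[i := b ! i + 1]) ! i - 1] = b"
      using b i by (intro nth_equalityI) (auto simp: nth_list_update)
    show "b[i := b ! i + 1] \<in> {a \<in> box m k. 0 < a ! i}"
      using b i k True by (auto simp: box_def k'_def nth_list_update split: if_splits)
  qed
  also have "\<dots> = shift i (mfps_mult m f g) k"
    using True by (simp add: shift_def mult_box k'_def)
  finally show ?thesis .
qed


section \<open>The weighted degree and the Euler operator\<close>

text \<open>The weighted degree D(k) = (d+1).k dominates |k| and drops by d_i+1 when k_i
  is lowered; these facts drive all inductions on multi-indices below.\<close>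

lemma sum_list_nth: "sum_list k = (\<Sum>i<length k. k ! i)"
  by (simp add: sum_list_sum_nth atLeast0LessThan)

lemma sum_list_le_dotp:
  assumes "length k = length d"
  shows "sum_list k \<le> dotp d k"
  unfolding sum_list_nth dotp_def assms by (rule sum_mono) auto

lemma sum_list_lower:
  fixes k :: "nat list"
  assumes "i < length k" "0 < k ! i"
  shows "sum_list (k[i := k ! i - 1]) + 1 = sum_list k"
  using sum_list_update[OF assms(1), of "k ! i - 1"] elem_le_sum_list[OF assms(1)] assms by simp

lemma dotp_lower:
  assumes "i < length d" "length k = length d" "0 < k ! i"
  shows "dotp d (k[i := k ! i - 1]) + (d ! i + 1) = dotp d k"
proof -
  have "(\<Sum>j<length d. (d ! j + 1) * k[i := k ! i - 1] ! j) + (d ! i + 1)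
      = (\<Sum>j<length d. (d ! j + 1) * k[i := k ! i - 1] ! j + (if j = i then d ! i + 1 else 0))"
    using assms(1) by (simp add: sum.distrib)
  also have "\<dots> = (\<Sum>j<length d. (d ! j + 1) * k ! j)"
  proof (rule sum.cong)
    obtain p where "k ! i = Suc p" using gr0_implies_Suc[OF assms(3)] ..
    hence "(d ! i + 1) * (k ! i - 1) + (d ! i + 1) = (d ! i + 1) * k ! i" by simp
    thus "(d ! j + 1) * k[i := k ! i - 1] ! j + (if j = i then d ! i + 1 else 0)
        = (d ! j + 1) * k ! j" if "j \<in> {..<length d}" for j
      using assms by (simp add: nth_list_update)
  qed simp
  finally show ?thesis by (simp add: dotp_def)
qed

text \<open>D is additive, so multiplying coefficients by D is a derivation of the product.\<close>

lemma dotp_complement: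
  assumes "a \<in> box m k" "length k = m" "length d = m"
  shows "dotp d a + dotp d (map2 (-) k a) = dotp d k"
proof -
  have "(d ! i + 1) * a ! i + (d ! i + 1) * (k ! i - a ! i) = (d ! i + 1) * k ! i" if "i < m" for i
  proof -
    have "a ! i + (k ! i - a ! i) = k ! i" using assms that by (simp add: box_def)
    thus ?thesis unfolding add_mult_distrib2[symmetric] by (rule arg_cong)
  qed
  thus ?thesis using assms by (simp add: dotp_def box_def flip: sum.distrib)
qed

lemma mult_euler:
  assumes "length k = m" "length d = m"
  shows "(real (dotp d k) + (x + y)) * mfps_mult m f g k
     = mfps_mult m (\<lambda>a. (real (dotp d a) + x) * f a) g k
       + mfps_mult m f (\<lambda>b. (real (dotp d b) + y) * g b) k"
proof -
  have "(real (dotp d k) + (x + y)) * mfps_mult m f g k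
      = (\<Sum>a\<in>box m k. ((real (dotp d a) + x) + (real (dotp d (map2 (-) k a)) + y))
                          * (f a * g (map2 (-) k a)))"
    unfolding mult_box sum_distrib_left
    by (rule sum.cong) (auto simp: dotp_complement[OF _ assms] algebra_simps simp flip: of_nat_add)
  thus ?thesis unfolding mult_box by (simp add: algebra_simps sum.distrib)
qed


section \<open>Multinomial coefficients\<close>

lemma fact_prod_pos: "(\<Prod>i<length k. fact (k ! i) :: real) > 0"
  by (rule prod_pos) auto

lemma fact_prod_lower:
  assumes "i < length k" "0 < k ! i"
  shows "(\<Prod>j<length k. fact (k ! j) :: real)
       = (\<Prod>j<length k. fact (k[i := k ! i - 1] ! j)) * real (k ! i)"
proof -
  have fin: "finite {..<length k}" by simp
  have "fact (k ! i) = (fact (k ! i - 1) :: real) * real (k ! i)"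
    using assms(2) fact_reduce[of "k ! i"] by (simp add: mult.commute)
  moreover have "(\<Prod>j\<in>{..<length k} - {i}. fact (k[i := k ! i - 1] ! j) :: real)
               = (\<Prod>j\<in>{..<length k} - {i}. fact (k ! j))"
    by (rule prod.cong) auto
  ultimately show ?thesis
    using prod.remove[OF fin, of i "\<lambda>j. fact (k[i := k ! i - 1] ! j) :: real"]
          prod.remove[OF fin, of i "\<lambda>j. fact (k ! j) :: real"] assms
    by simp
qed

lemma multinom_Suc:
  assumes "sum_list k \<le> N"
  shows "multinom (Suc N) k * real (Suc N - sum_list k) = real (Suc N) * multinom N k"
proof -
  have "Suc N - sum_list k = Suc (N - sum_list k)" using assms by simp
  thus ?thesis unfolding multinom_def using fact_prod_pos[of k]
    by (simp add: field_simps fact_Suc del: of_nat_Suc)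
qed

lemma multinom_lower:
  assumes "i < length k" "0 < k ! i" "sum_list k \<le> N"
  shows "multinom N (k[i := k ! i - 1]) * real (Suc N - sum_list k) = real (k ! i) * multinom N k"
proof -
  have "N - sum_list (k[i := k ! i - 1]) = Suc (N - sum_list k)"
    using sum_list_lower[OF assms(1,2)] assms(3) by linarith
  moreover have "Suc N - sum_list k = Suc (N - sum_list k)" using assms(3) by simp
  ultimately show ?thesis
    unfolding multinom_def fact_prod_lower[OF assms(1,2)]
    using fact_prod_pos[of "k[i := k ! i - 1]"] assms(2)
    by (simp add: field_simps fact_Suc del: of_nat_Suc)
qed


section \<open>The coefficients of the powers of z\<close>

lemma combine_fractions:
  fixes a Q X :: real
  assumes "a \<noteq> 0" "Q \<noteq> 0" "u * Q - v * a + w = t"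
  shows "t * X / (a * Q) = u * X / a - v * X / Q + w * X / (a * Q)"
  unfolding assms(3)[symmetric] using assms(1,2) by (simp add: field_simps)

text \<open>P d r is the coefficient series of z^r (Lagrange inversion).\<close>

definition P :: "nat list \<Rightarrow> nat \<Rightarrow> mfps" where
  "P d r k = (if r = 0 then mone (length d) k
              else real r / real (dotp d k + r) * multinom (dotp d k + r) k)"

lemma P_Suc:
  assumes "length k = length d"
  shows "P d (Suc c) k
       = real (Suc c) * multinom (dotp d k + c) k / real (Suc (dotp d k + c) - sum_list k)"
proof -
  have "sum_list k \<le> dotp d k + c" using sum_list_le_dotp[OF assms] by simp
  from multinom_Suc[OF this] this show ?thesis
    by (simp add: P_def field_simps del: of_nat_Suc)
qed

lemma shift_P:
  assumes kd: "length k = length d" and i: "i < length d"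
  shows "shift i (P d (c + d ! i + 1)) k
    = real (c + d ! i + 1) * real (k ! i) * multinom (dotp d k + c) k
       / (real (dotp d k + c) * real (Suc (dotp d k + c) - sum_list k))"
proof (cases "0 < k ! i")
  case False thus ?thesis by (simp add: shift_def)
next
  case True
  define k' where "k' = k[i := k ! i - 1]"
  have N: "dotp d k' + (c + d ! i + 1) = dotp d k + c"
    using dotp_lower[OF i kd True] unfolding k'_def by simp
  have nD: "sum_list k \<le> dotp d k + c" using sum_list_le_dotp[OF kd] by simp
  have "multinom (dotp d k + c) k' * real (Suc (dotp d k + c) - sum_list k)
      = real (k ! i) * multinom (dotp d k + c) k"
    unfolding k'_def by (rule multinom_lower) (use True i kd nD in auto)
  moreover have "real (Suc (dotp d k + c) - sum_list k) > 0" using nD by simp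
  ultimately have lower: "multinom (dotp d k + c) k'
      = real (k ! i) * multinom (dotp d k + c) k / real (Suc (dotp d k + c) - sum_list k)"
    by (simp add: eq_divide_eq)
  have "P d (c + d ! i + 1) k' = real (c + d ! i + 1) / real (dotp d k' + (c + d ! i + 1))
                                   * multinom (dotp d k' + (c + d ! i + 1)) k'"
    by (simp add: P_def)
  hence "shift i (P d (c + d ! i + 1)) k
      = real (c + d ! i + 1) / real (dotp d k + c) * multinom (dotp d k + c) k'"
    using True unfolding shift_def k'_def[symmetric] N by simp
  thus ?thesis unfolding lower by simp
qed

lemma sum_weights:
  assumes "length k = length d"
  shows "(\<Sum>i<length d. (c + d ! i + 1) * k ! i) = c * sum_list k + dotp d k"
  unfolding sum_list_nth dotp_def assms sum_distrib_left sum.distrib[symmetric]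
  by (rule sum.cong) (auto simp: algebra_simps)

text \<open>The recursion z^(r+1) = z^r + sum_i s_i z^(r+1+d_i), read off coefficientwise.\<close>

lemma P_rec:
  assumes kd: "length k = length d"
  shows "P d (Suc r) k = P d r k + (\<Sum>i<length d. shift i (P d (Suc r + d ! i)) k)"
proof (cases "k = replicate (length d) 0")
  case True
  have "shift i f k = 0" if "i < length d" for i f using True that by (simp add: shift_def)
  moreover have "multinom N k = 1" for N using True by (simp add: multinom_def sum_list_replicate)
  ultimately show ?thesis using True by (simp add: P_def dotp_def mone_def)
next
  case False
  then obtain j where j: "j < length d" "k ! j \<noteq> 0"
    using kd by (metis in_set_conv_nth replicate_eqI)
  define n where "n = sum_list k"
  define N where "N = dotp d k + r"
  define Z where "Z = multinom N k"
  define Q where "Q = real (Suc N - n)"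
  have n1: "1 \<le> n" using elem_le_sum_list[of j k] j kd unfolding n_def by simp
  have nN: "n \<le> N" using sum_list_le_dotp[OF kd] unfolding n_def N_def by simp
  have "(\<Sum>i<length d. shift i (P d (Suc r + d ! i)) k)
        = (\<Sum>i<length d. real ((r + d ! i + 1) * k ! i)) * Z / (real N * Q)"
    unfolding sum_distrib_right sum_divide_distrib
    by (rule sum.cong)
       (use shift_P[OF kd, of _ r] in \<open>simp_all add: Z_def N_def n_def Q_def algebra_simps\<close>)
  also have "\<dots> = (real r * real n + real (dotp d k)) * Z / (real N * Q)"
    unfolding of_nat_sum[symmetric] sum_weights[OF kd] n_def by simp
  finally have S: "(\<Sum>i<length d. shift i (P d (Suc r + d ! i)) k)
      = (real r * real n + real (dotp d k)) * Z / (real N * Q)" .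
  have Pr: "P d r k = real r * Z / real N"
    using False kd by (simp add: P_def mone_def N_def Z_def)
  have PSuc: "P d (Suc r) k = real (Suc r) * Z / Q"
    using P_Suc[OF kd] by (simp add: Z_def N_def n_def Q_def)
  have "real N \<noteq> 0" using n1 nN by simp
  moreover have "Q \<noteq> 0" using nN by (simp add: Q_def)
  moreover have "real r * Q - 0 * real N + (real r * real n + real (dotp d k)) = real (Suc r) * real N"
    using nN by (simp add: Q_def N_def of_nat_diff algebra_simps)
  ultimately have "real (Suc r) * real N * Z / (real N * Q)
      = real r * Z / real N - 0 * Z / Q + (real r * real n + real (dotp d k)) * Z / (real N * Q)"
    by (rule combine_fractions)
  with \<open>real N \<noteq> 0\<close> show ?thesis unfolding S Pr PSuc by simp
qed

text \<open>A family of series satisfying the recursion of P_rec is determined by its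
  member at r = 0: induct on |k|, and for fixed k on r.\<close>

lemma rec_unique:
  fixes B B' :: "nat \<Rightarrow> mfps"
  assumes base: "\<And>k. length k = length d \<Longrightarrow> B 0 k = B' 0 k"
    and rec: "\<And>r k. length k = length d \<Longrightarrow>
                 B (Suc r) k = B r k + (\<Sum>i<length d. shift i (B (Suc r + d ! i)) k)"
    and rec': "\<And>r k. length k = length d \<Longrightarrow>
                 B' (Suc r) k = B' r k + (\<Sum>i<length d. shift i (B' (Suc r + d ! i)) k)"
    and kd: "length k = length d"
  shows "B r k = B' r k"
  using kd
proof (induction "sum_list k" arbitrary: k r rule: less_induct)
  case less
  show ?case
  proof (induction r)
    case 0 thus ?case using base less.prems by simp
  next
    case (Suc r)
    have "shift i (B (Suc r + d ! i)) k = shift i (B' (Suc r + d ! i)) k" if "i < length d" for i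
    proof (cases "0 < k ! i")
      case True
      have "sum_list (k[i := k ! i - 1]) < sum_list k"
        using sum_list_lower[of i k] True that less.prems by simp
      thus ?thesis using less.hyps[of "k[i := k ! i - 1]"] less.prems True by (simp add: shift_def)
    qed (simp add: shift_def)
    thus ?case using rec[OF less.prems, of r] rec'[OF less.prems, of r] Suc.IH by simp
  qed
qed

text \<open>z^r z^t = z^(r+t): both sides solve the recursion in r.\<close>

lemma P_mult:
  assumes "length k = length d"
  shows "mfps_mult (length d) (P d r) (P d t) k = P d (r + t) k"
proof (rule rec_unique[where B = "\<lambda>r. mfps_mult (length d) (P d r) (P d t)"
                           and B' = "\<lambda>r. P d (r + t)"])
  fix k :: "nat list" assume "length k = length d"
  thus "mfps_mult (length d) (P d 0) (P d t) k = P d (0 + t) k"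
    by (simp add: mult_one_left P_def[of d 0, abs_def])
next
  fix r :: nat and k :: "nat list" assume k: "length k = length d"
  have "mfps_mult (length d) (P d (Suc r)) (P d t) k
      = mfps_mult (length d) (\<lambda>a. P d r a + (\<Sum>i<length d. shift i (P d (Suc r + d ! i)) a)) (P d t) k"
    by (rule mult_cong_left) (rule P_rec)
  thus "mfps_mult (length d) (P d (Suc r)) (P d t) k
      = mfps_mult (length d) (P d r) (P d t) k
        + (\<Sum>i<length d. shift i (mfps_mult (length d) (P d (Suc r + d ! i)) (P d t)) k)"
    by (simp add: mult_add_left mult_sum_left mult_shift_left k)
next
  fix r :: nat and k :: "nat list" assume "length k = length d"
  from P_rec[OF this, of "r + t"]
  show "P d (Suc r + t) k = P d (r + t) k + (\<Sum>i<length d. shift i (P d (Suc r + d ! i + t)) k)"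
    by (simp add: ac_simps)
qed (rule assms)


section \<open>Closed forms of F and G\<close>

lemma euler_F: "(real (dotp d a) + 1) * Fser d a = 1/2 * P d 2 a"
proof -
  define x where "x = real (dotp d a)"
  define M where "M = multinom (2 + dotp d a) a"
  have "x \<ge> 0" unfolding x_def by simp
  have "(x + 1) * Fser d a = (x + 1) * (M / ((x + 1) * (x + 2)))"
    by (simp add: Fser_def M_def x_def add.commute)
  also have "\<dots> = M / (x + 2)" using \<open>x \<ge> 0\<close> by simp
  also have "\<dots> = 1/2 * P d 2 a" by (simp add: P_def M_def x_def add.commute)
  finally show ?thesis unfolding x_def .
qed

lemma F_expansion:
  assumes kd: "length k = length d"
  shows "Fser d k = P d 1 k - P d 2 k / 2
           + (\<Sum>i<length d. shift i (P d (d ! i + 2)) k / real (d ! i + 2))"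
proof -
  define D where "D = dotp d k"
  define n where "n = sum_list k"
  define X where "X = multinom (D + 1) k"
  define Q where "Q = real (Suc (D + 1) - n)"
  have nD: "n \<le> D" unfolding n_def D_def by (rule sum_list_le_dotp[OF kd])
  have Qe: "Q = real D + 2 - real n" using nD unfolding Q_def by (simp add: of_nat_diff)
  have "(\<Sum>i<length d. shift i (P d (d ! i + 2)) k / real (d ! i + 2))
      = (\<Sum>i<length d. real (k ! i)) * X / ((real D + 1) * Q)"
    unfolding sum_distrib_right sum_divide_distrib
    by (rule sum.cong)
       (use shift_P[OF kd, of _ 1] in \<open>simp_all add: X_def Q_def D_def n_def ac_simps\<close>)
  also have "(\<Sum>i<length d. real (k ! i)) = real n" unfolding n_def sum_list_nth kd by simp
  finally have S: "(\<Sum>i<length d. shift i (P d (d ! i + 2)) k / real (d ! i + 2))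
      = real n * X / ((real D + 1) * Q)" .
  have P1: "P d 1 k = X / (real D + 1)" by (simp add: P_def D_def X_def)
  have P2: "P d 2 k = 2 * X / Q"
    using P_Suc[OF kd, of 1] by (simp add: X_def Q_def D_def n_def numeral_2_eq_2)
  have "Q > 0" using nD unfolding Q_def by simp
  have "real D + 1 \<noteq> 0" by linarith
  moreover have "(real D + 1) * Fser d k = X / Q" using euler_F[of d k] P2 by (simp add: D_def)
  ultimately have F: "Fser d k = X / ((real D + 1) * Q)"
    by (simp add: eq_divide_eq ac_simps flip: divide_divide_eq_left)
  have "1 * Q - 1 * (real D + 1) + real n = 1" using Qe by simp
  with \<open>Q > 0\<close> \<open>real D + 1 \<noteq> 0\<close> show ?thesis
    unfolding S P1 P2 F using combine_fractions[of "real D + 1" Q 1 1 "real n" 1 X] by simp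
qed

lemma weight_split: "real (e + 4) / real (e + 2) * x
   = real (e * (e + 1)) / real (e + 2) * x - real (e + 1) * x + 3 * x"
  by (simp add: field_simps)

lemma euler_G:
  assumes kd: "length k = length d"
  shows "(real (dotp d k) + 2) * Gser d k
       = P d 3 k - P d 4 k / 2 + (\<Sum>i<length d. shift i (P d (d ! i + 4)) k / real (d ! i + 2))"
proof -
  define D where "D = dotp d k"
  define n where "n = sum_list k"
  define C where "C = (\<Sum>i<length d. real (d ! i * (d ! i + 1)) / real (d ! i + 2) * real (k ! i))"
  define Y where "Y = multinom (D + 3) k"
  define Q where "Q = real (Suc (D + 3) - n)"
  have nD: "n \<le> D" unfolding n_def D_def by (rule sum_list_le_dotp[OF kd])
  have Qe: "Q = real D + 4 - real n" using nD unfolding Q_def by (simp add: of_nat_diff)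
  have "(\<Sum>i<length d. shift i (P d (d ! i + 4)) k / real (d ! i + 2))
      = (\<Sum>i<length d. real (d ! i + 4) / real (d ! i + 2) * real (k ! i)) * Y / ((real D + 3) * Q)"
    unfolding sum_distrib_right sum_divide_distrib
    by (rule sum.cong)
       (use shift_P[OF kd, of _ 3] in \<open>simp_all add: Y_def Q_def D_def n_def ac_simps\<close>)
  also have "(\<Sum>i<length d. real (d ! i + 4) / real (d ! i + 2) * real (k ! i))
      = (\<Sum>i<length d. real (d ! i * (d ! i + 1)) / real (d ! i + 2) * real (k ! i)
                          - real (d ! i + 1) * real (k ! i) + 3 * real (k ! i))"
    by (rule sum.cong) (simp_all only: weight_split)
  also have "\<dots> = C - real D + 3 * real n"
    unfolding C_def D_def n_def dotp_def sum_list_nth kd sum.distrib sum_subtractf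
    by (simp add: sum_distrib_left algebra_simps sum.distrib)
  finally have S: "(\<Sum>i<length d. shift i (P d (d ! i + 4)) k / real (d ! i + 2))
      = (C - real D + 3 * real n) * Y / ((real D + 3) * Q)" .
  have "Q > 0" using nD unfolding Q_def by simp
  have pos: "real D + 2 \<noteq> 0" "real D + 3 \<noteq> 0" "real D + 4 \<noteq> 0" by linarith+
  have "multinom (Suc (D + 3)) k * Q = real (Suc (D + 3)) * Y"
    unfolding Q_def Y_def n_def by (rule multinom_Suc) (use nD n_def in simp)
  hence M4: "multinom (D + 4) k = (real D + 4) * Y / Q"
    using \<open>Q > 0\<close> by (simp add: eq_divide_eq add.commute)
  have P3: "P d 3 k = 3 * Y / (real D + 3)" by (simp add: P_def D_def Y_def)
  have "P d 4 k = 4 / (real D + 4) * multinom (D + 4) k" by (simp add: P_def D_def add.commute)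
  hence P4: "P d 4 k / 2 = 2 * Y / Q" unfolding M4 using pos by simp
  have "(real D + 2) * Gser d k
      = (real D + 2) * ((6 + C) / ((real D + 2) * (real D + 3) * (real D + 4)) * multinom (D + 4) k)"
    unfolding Gser_def C_def[symmetric] D_def[symmetric] by (simp add: add.commute)
  hence G: "(real D + 2) * Gser d k = (6 + C) * Y / ((real D + 3) * Q)"
    unfolding M4 using pos by simp
  have "3 * Q - 2 * (real D + 3) + (C - real D + 3 * real n) = 6 + C" using Qe by simp
  with \<open>Q > 0\<close> pos show ?thesis
    unfolding D_def[symmetric] S P3 P4 G
    using combine_fractions[of "real D + 3" Q 3 2 "C - real D + 3 * real n" "6 + C" Y] by simp
qed


text \<open>(theta + 2)(F^2) = F z^2 by the Leibniz rule, which expands to (theta + 2) G;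
  then cancel the positive factor D(k) + 2.\<close>

lemma G_eq_F_squared:
  assumes kd: "length k = length d"
  shows "Gser d k = mpow (length d) (Fser d) 2 k"
proof -
  let ?m = "length d" and ?F = "Fser d"
  have "(real (dotp d k) + 2) * mfps_mult ?m ?F ?F k
      = mfps_mult ?m (\<lambda>a. 1/2 * P d 2 a) ?F k + mfps_mult ?m ?F (\<lambda>b. 1/2 * P d 2 b) k"
    using mult_euler[OF kd refl, of 1 1 ?F ?F] by (simp add: euler_F)
  also have "\<dots> = mfps_mult ?m ?F (P d 2) k"
    unfolding mult_scale_left mult_scale_right mult_comm[OF kd, of "P d 2"] by simp
  also have "\<dots> = mfps_mult ?m (\<lambda>a. P d 1 a - P d 2 a / 2
                  + (\<Sum>i<?m. shift i (P d (d ! i + 2)) a / real (d ! i + 2))) (P d 2) k"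
    by (rule mult_cong_left) (rule F_expansion)
  also have "\<dots> = P d 3 k - P d 4 k / 2 + (\<Sum>i<?m. shift i (P d (d ! i + 4)) k / real (d ! i + 2))"
  proof -
    have "shift i (mfps_mult ?m (P d (d ! i + 2)) (P d 2)) k = shift i (P d (d ! i + 4)) k" for i
      by (rule shift_cong) (use P_mult[of _ d "d ! i + 2" 2] kd in \<open>simp add: numeral_eq_Suc\<close>)
    moreover have "mfps_mult ?m (P d 1) (P d 2) k = P d 3 k"
      using P_mult[OF kd, of 1 2] by (simp add: numeral_3_eq_3)
    moreover have "mfps_mult ?m (P d 2) (P d 2) k = P d 4 k" using P_mult[OF kd, of 2 2] by simp
    ultimately show ?thesis
      by (simp add: mult_add_left mult_diff_left mult_divide_left mult_sum_left mult_shift_left kd)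
  qed
  also have "\<dots> = (real (dotp d k) + 2) * Gser d k" by (rule euler_G[OF kd, symmetric])
  finally show ?thesis using mpow_two[OF kd] by (simp add: add_nonneg_eq_0_iff)
qed

theorem theoremA2:
  fixes d :: "nat list" and z :: mfps
  assumes z0: "z (replicate (length d) 0) = 1"
    and zeq: "\<forall>k. length k = length d \<longrightarrow> Eser d z k = 0"
  shows "(\<forall>k. length k = length d \<longrightarrow>
            Gser d k = mpow (length d) (Fser d) 2 k)
       \<and> (\<forall>k. length k = length d \<longrightarrow>
            Gser d k = mpow (length d) (Fser d) 2 k
               - 1/4 * mfps_mult (length d) (mpow (length d) z 2) (mpow (length d) (Eser d z) 2) k)"
proof -
  text \<open>The correction term vanishes because z solves its defining equation.\<close>
  have "mpow (length d) (Eser d z) 2 b = 0" for b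
    using zeq by (simp add: numeral_2_eq_2 mfps_mult_def)
  hence "mfps_mult (length d) (mpow (length d) z 2) (mpow (length d) (Eser d z) 2) k = 0" for k
    by (simp add: mfps_mult_def)
  thus ?thesis using G_eq_F_squared by simp
qed

end
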